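(* Let $\epsilon>0$. The weighted cycle augmentation problem admits a one-pass $(2+\epsilon)$-approximation streaming algorithm whose total memory is $O\!\left(\frac{n}{\epsilon}\log\min(W,n)\right)$ edges.
   Context: Weighted cycle augmentation problem: given a cycle $C$ on vertex set $V=\{0,1,\dots,n-1\}$ (edges $(i-1,i)$, indices mod $n$), which is known in advance, and a set of links $L\subseteq\binom{V}{2}$ with weights $w:L\to\{0,1,\dots,W\}$ that arrive one by one in an arbitrary order in a stream, find a minimum-weight subset $S\subseteq L$ such that $(V,C\cup S)$ is $3$-edge-connected. A $(2+\epsilon)$-approximation outputs a feasible $S$ of weight at most $(2+\epsilon)$ times the optimum. *)

theory Defs
  imports Complex_Main
begin

text \<open>Vertices are 0..n-1; cycle edges are (i, (i+1) mod n). A link is a pair (u,v) with u < v < n.\<close>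

definition is_link :: "nat \<Rightarrow> nat \<times> nat \<Rightarrow> bool" where
  "is_link n e \<longleftrightarrow> fst e < snd e \<and> snd e < n"

definition cut_size :: "nat \<Rightarrow> (nat \<times> nat) set \<Rightarrow> nat set \<Rightarrow> nat" where
  "cut_size n S X =
     card {i. i < n \<and> ((i \<in> X) \<noteq> ((i + 1) mod n \<in> X))}
   + card {e \<in> S. (fst e \<in> X) \<noteq> (snd e \<in> X)}"

definition three_edge_connected :: "nat \<Rightarrow> (nat \<times> nat) set \<Rightarrow> bool" where
  "three_edge_connected n S \<longleftrightarrow>
     (\<forall>X. X \<subseteq> {..<n} \<and> X \<noteq> {} \<and> X \<noteq> {..<n} \<longrightarrow> cut_size n S X \<ge> 3)"

definition feasible_aug :: "nat \<Rightarrow> (nat \<times> nat) set \<Rightarrow> (nat \<times> nat) set \<Rightarrow> bool" where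
  "feasible_aug n L S \<longleftrightarrow> S \<subseteq> L \<and> three_edge_connected n S"

definition weight :: "(nat \<times> nat \<Rightarrow> nat) \<Rightarrow> (nat \<times> nat) set \<Rightarrow> nat" where
  "weight w S = (\<Sum>e\<in>S. w e)"

definition opt_aug :: "nat \<Rightarrow> (nat \<times> nat) set \<Rightarrow> (nat \<times> nat \<Rightarrow> nat) \<Rightarrow> nat" where
  "opt_aug n L w = Min (weight w ` {S. feasible_aug n L S})"

text \<open>Running a one-pass streaming algorithm (state = list of machine words) on a prefix
  of the stream; each arriving item is (u, v, w(u,v)).\<close>
definition run_stream ::
  "(nat list \<Rightarrow> nat \<times> nat \<times> nat \<Rightarrow> nat list) \<Rightarrow> nat list \<Rightarrow> (nat \<times> nat \<Rightarrow> nat)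
     \<Rightarrow> (nat \<times> nat) list \<Rightarrow> nat list" where
  "run_stream step init w xs = fold (\<lambda>e s. step s (fst e, snd e, w e)) xs init"

end

theory Submission
  imports Defs "HOL-Library.FuncSet"
begin

(* Round the weights up to powers of rho = 1 + eps/2. For every vertex u and weight class j the
   algorithm remembers only the link (u, v) of class j reaching farthest to the right, and for
   every vertex v and class j the link (u, v) reaching farthest to the left; at the end it outputs
   a cheapest 3-edge-connecting set of remembered links, each priced at the top of its class.
   Replacing every link of an optimum by its two remembered shadows keeps the graph
   3-edge-connected: a cut avoiding vertex 0 with fewer than three cycle edges is an interval of
   the path 1, ..., n - 1, and a shadow crosses every interval that the original link crosses.
   The shadows cost at most 2 rho OPT.
   The table has 2 n L entries in {0..n} with L = O(log W / eps) classes, so it can be packed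
   injectively into r words below n + W + 2 as soon as (n + 1)^(2 n L) <= (n + W + 2)^r, and the
   least such r is O(n / eps * log min(W, n)). *)

section \<open>Cuts of the cycle\<close>

definition cycle_boundary :: "nat \<Rightarrow> nat set \<Rightarrow> nat set" where
  "cycle_boundary n X = {i. i < n \<and> ((i \<in> X) \<noteq> ((i + 1) mod n \<in> X))}"

definition link_boundary :: "(nat \<times> nat) set \<Rightarrow> nat set \<Rightarrow> (nat \<times> nat) set" where
  "link_boundary S X = {e \<in> S. (fst e \<in> X) \<noteq> (snd e \<in> X)}"

lemma finite_cycle_boundary [simp]: "finite (cycle_boundary n X)"
  unfolding cycle_boundary_def by simp

lemma cut_size_eq: "cut_size n S X = card (cycle_boundary n X) + card (link_boundary S X)"
  unfolding cut_size_def cycle_boundary_def link_boundary_def by simp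

lemma cut_size_complement:
  assumes "0 < n" and "\<forall>e\<in>S. fst e < n \<and> snd e < n"
  shows "cut_size n S ({..<n} - X) = cut_size n S X"
proof -
  have "cycle_boundary n ({..<n} - X) = cycle_boundary n X"
    unfolding cycle_boundary_def using assms(1) by auto
  moreover have "link_boundary S ({..<n} - X) = link_boundary S X"
    unfolding link_boundary_def using assms(2) by auto
  ultimately show ?thesis
    by (simp add: cut_size_eq)
qed

lemma Suc_mod_if: "i < n \<Longrightarrow> Suc i mod n = (if Suc i = n then 0 else Suc i)"
  by auto

lemma cycle_boundary_interval:
  assumes "1 \<le> a" "a \<le> b" "b < n"
  shows "cycle_boundary n {a..b} = {a - 1, b}"
  unfolding cycle_boundary_def using assms by (auto simp: Suc_mod_if split: if_splits)

lemma exists_step_out: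
  assumes "a \<in> X" "c \<notin> X" "a < c"
  shows "\<exists>i. a \<le> i \<and> i < c \<and> i \<in> X \<and> Suc i \<notin> X"
  using assms
proof (induction c)
  case (Suc c)
  then show ?case
  proof (cases "c \<in> X")
    case True
    then show ?thesis
      using Suc.prems by (intro exI[of _ c]) auto
  next
    case False
    then show ?thesis
      using Suc by (auto simp: less_Suc_eq)
  qed
qed simp

lemma card_cycle_boundary_non_interval:
  assumes X: "X \<subseteq> {..<n}" "X \<noteq> {}" "0 \<notin> X" and gap: "X \<noteq> {Min X..Max X}"
  shows "3 \<le> card (cycle_boundary n X)"
proof -
  define a b where "a = Min X" and "b = Max X"
  have "finite X"
    using X(1) finite_subset by blast
  then have a: "a \<in> X" "\<And>x. x \<in> X \<Longrightarrow> a \<le> x" and b: "b \<in> X" "\<And>x. x \<in> X \<Longrightarrow> x \<le> b"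
    using X(2) unfolding a_def b_def by auto
  have "1 \<le> a" "b < n"
    using a b X by (auto simp: Suc_le_eq gr0I)
  obtain c where c: "c \<notin> X" "a < c" "c < b"
    using gap a b unfolding a_def[symmetric] b_def[symmetric] by (force simp: order.order_iff_strict)
  obtain i where i: "a \<le> i" "i < c" "i \<in> X" "Suc i \<notin> X"
    using exists_step_out[OF a(1) c(1,2)] by blast
  have "a - 1 \<notin> X"
    using a(2) \<open>1 \<le> a\<close> by fastforce
  moreover have "(b + 1) mod n \<notin> X"
    using b(2)[of "Suc b"] X(3) \<open>b < n\<close> by (auto simp: Suc_mod_if)
  ultimately have "{a - 1, b, i} \<subseteq> cycle_boundary n X"
    using a(1) b(1) i c \<open>1 \<le> a\<close> \<open>b < n\<close> unfolding cycle_boundary_def by auto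
  moreover have "card {a - 1, b, i} = 3"
    using i c \<open>1 \<le> a\<close> by (simp add: card_insert_if) linarith
  ultimately show ?thesis
    by (metis card_mono finite_cycle_boundary)
qed

definition shadows :: "(nat \<times> nat) set \<Rightarrow> (nat \<times> nat) set \<Rightarrow> bool" where
  "shadows S' S \<longleftrightarrow>
     (\<forall>e\<in>S. (\<exists>v. (fst e, v) \<in> S' \<and> snd e \<le> v) \<and> (\<exists>u. (u, snd e) \<in> S' \<and> u \<le> fst e))"

lemma link_boundary_interval_shadows:
  assumes "shadows S' S" and "\<forall>e\<in>S. fst e < snd e" and "link_boundary S {a..b} \<noteq> {}"
  shows "link_boundary S' {a..b} \<noteq> {}"
proof -
  obtain e where e: "e \<in> S" "(fst e \<in> {a..b}) \<noteq> (snd e \<in> {a..b})"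
    using assms(3) unfolding link_boundary_def by blast
  obtain v u where "(fst e, v) \<in> S'" "snd e \<le> v" "(u, snd e) \<in> S'" "u \<le> fst e"
    using assms(1) e(1) unfolding shadows_def by blast
  moreover have "fst e < snd e"
    using assms(2) e(1) by blast
  ultimately show ?thesis
    using e(2) unfolding link_boundary_def by (cases "fst e \<in> {a..b}") force+
qed

lemma cut_size_shadows:
  assumes X: "X \<subseteq> {..<n}" "X \<noteq> {}" "0 \<notin> X"
    and "finite S'" "shadows S' S" "\<forall>e\<in>S. fst e < snd e" "3 \<le> cut_size n S X"
  shows "3 \<le> cut_size n S' X"
proof (cases "X = {Min X..Max X}")
  case True
  define a b where "a = Min X" and "b = Max X"
  have "finite X"
    using X(1) finite_subset by blast
  then have "a \<in> X" "b \<in> X" "a \<le> b"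
    using X(2) unfolding a_def b_def by auto
  then have ab: "1 \<le> a" "a \<le> b" "b < n"
    using X by (auto simp: Suc_le_eq gr0I)
  have "cycle_boundary n X = {a - 1, b}"
    using True cycle_boundary_interval[OF ab] unfolding a_def b_def by simp
  then have "card (cycle_boundary n X) = 2"
    using ab by simp
  then have "link_boundary S X \<noteq> {}"
    using assms(7) by (auto simp: cut_size_eq)
  then have "link_boundary S' X \<noteq> {}"
    using link_boundary_interval_shadows[OF assms(5,6)] True by metis
  moreover have "finite (link_boundary S' X)"
    using assms(4) unfolding link_boundary_def by simp
  ultimately show ?thesis
    using \<open>card (cycle_boundary n X) = 2\<close> by (simp add: cut_size_eq card_gt_0_iff Suc_le_eq)
next
  case False
  then show ?thesis
    using card_cycle_boundary_non_interval[OF X] by (simp add: cut_size_eq)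
qed

lemma three_edge_connected_shadows:
  assumes S: "three_edge_connected n S" "\<forall>e\<in>S. fst e < snd e"
    and S': "finite S'" "\<forall>e\<in>S'. fst e < n \<and> snd e < n" "shadows S' S"
  shows "three_edge_connected n S'"
  unfolding three_edge_connected_def
proof (intro allI impI)
  fix X assume X: "X \<subseteq> {..<n} \<and> X \<noteq> {} \<and> X \<noteq> {..<n}"
  show "3 \<le> cut_size n S' X"
  proof (cases "0 \<in> X")
    case False
    then show ?thesis
      using X S cut_size_shadows[OF _ _ _ S'(1,3)] unfolding three_edge_connected_def by blast
  next
    case True
    define Y where "Y = {..<n} - X"
    have Y: "Y \<subseteq> {..<n}" "Y \<noteq> {}" "0 \<notin> Y" "Y \<noteq> {..<n}"
      using X True unfolding Y_def by auto
    then have "3 \<le> cut_size n S' Y"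
      using S cut_size_shadows[OF _ _ _ S'(1,3)] unfolding three_edge_connected_def by blast
    moreover have "cut_size n S' Y = cut_size n S' X"
      unfolding Y_def using X True by (intro cut_size_complement S'(2)) auto
    ultimately show ?thesis
      by simp
  qed
qed

section \<open>Weight classes\<close>

definition weight_class :: "real \<Rightarrow> nat \<Rightarrow> nat" where
  "weight_class \<rho> w = (if w = 0 then 0 else Suc (LEAST j. real w \<le> \<rho> ^ j))"

definition class_bound :: "real \<Rightarrow> nat \<Rightarrow> real" where
  "class_bound \<rho> j = (if j = 0 then 0 else \<rho> ^ (j - 1))"

definition num_classes :: "real \<Rightarrow> nat \<Rightarrow> nat" where
  "num_classes \<rho> W = nat \<lceil>ln (real W) / ln \<rho>\<rceil> + 2"

lemma class_bound_nonneg: "1 < \<rho> \<Longrightarrow> 0 \<le> class_bound \<rho> j"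
  unfolding class_bound_def by simp

lemma weight_class_bounds:
  assumes "1 < \<rho>"
  shows "real w \<le> class_bound \<rho> (weight_class \<rho> w)"
    and "class_bound \<rho> (weight_class \<rho> w) \<le> \<rho> * real w"
proof -
  define j where "j = (LEAST j. real w \<le> \<rho> ^ j)"
  obtain j0 where "real w \<le> \<rho> ^ j0"
    using real_arch_pow[OF assms] by (meson less_imp_le)
  then have "real w \<le> \<rho> ^ j"
    unfolding j_def by (rule LeastI)
  moreover have "\<rho> ^ j \<le> \<rho> * real w" if "w \<noteq> 0"
  proof (cases j)
    case 0
    then show ?thesis
      using assms that mult_mono[of 1 \<rho> 1 "real w"] by simp
  next
    case (Suc i)
    then have "\<not> real w \<le> \<rho> ^ i"
      using not_less_Least[of i "\<lambda>j. real w \<le> \<rho> ^ j"] unfolding j_def by simp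
    then show ?thesis
      using Suc assms by simp
  qed
  ultimately show "real w \<le> class_bound \<rho> (weight_class \<rho> w)"
    and "class_bound \<rho> (weight_class \<rho> w) \<le> \<rho> * real w"
    unfolding weight_class_def class_bound_def j_def by auto
qed

lemma weight_class_less_num_classes:
  assumes "1 < \<rho>" "w \<le> W"
  shows "weight_class \<rho> w < num_classes \<rho> W"
proof (cases "w = 0")
  case False
  define j where "j = nat \<lceil>ln (real W) / ln \<rho>\<rceil>"
  have "ln (real W) / ln \<rho> \<le> real j"
    unfolding j_def by linarith
  then have "ln (real W) \<le> real j * ln \<rho>"
    using assms(1) by (simp add: divide_le_eq)
  then have "real W \<le> \<rho> ^ j"
    using assms False by (simp add: ln_realpow[symmetric] ln_le_cancel_iff)
  then have "real w \<le> \<rho> ^ j"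
    using assms(2) by (meson of_nat_le_iff order_trans)
  then have "(LEAST j. real w \<le> \<rho> ^ j) \<le> j"
    by (rule Least_le)
  then show ?thesis
    unfolding weight_class_def num_classes_def j_def using False by simp
qed (simp add: weight_class_def num_classes_def)

section \<open>The sketch\<close>

text \<open>Cell \<open>(0, u, j)\<close> holds \<open>1 + v\<close> for the largest \<open>v\<close> such that a link \<open>(u, v)\<close> of class
  \<open>j\<close> has arrived, and cell \<open>(1, v, j)\<close> holds \<open>n - u\<close> for the smallest such \<open>u\<close>; the value 0
  means that no such link has arrived. Values are capped at \<open>n\<close> and cells outside
  \<open>sketch_cells\<close> are undefined, so the sketches form the finite set of functions from
  \<open>sketch_cells n L\<close> to \<open>{..n}\<close>.\<close>

type_synonym table = "nat \<times> nat \<times> nat \<Rightarrow> nat"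

definition sketch_cells :: "nat \<Rightarrow> nat \<Rightarrow> (nat \<times> nat \<times> nat) set" where
  "sketch_cells n L = {0, 1} \<times> {..<n} \<times> {..<L}"

definition sketch_init :: "nat \<Rightarrow> nat \<Rightarrow> table" where
  "sketch_init n L = restrict (\<lambda>_. 0) (sketch_cells n L)"

definition sketch_update :: "nat \<Rightarrow> nat \<Rightarrow> real \<Rightarrow> table \<Rightarrow> nat \<times> nat \<times> nat \<Rightarrow> table" where
  "sketch_update n L \<rho> T x = (case x of (u, v, wt) \<Rightarrow> restrict (\<lambda>(t, i, j).
     if t = 0 \<and> i = u \<and> j = weight_class \<rho> wt then max (T (t, i, j)) (min n (Suc v))
     else if t = 1 \<and> i = v \<and> j = weight_class \<rho> wt then max (T (t, i, j)) (n - u)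
     else T (t, i, j)) (sketch_cells n L))"

definition sketch :: "nat \<Rightarrow> nat \<Rightarrow> real \<Rightarrow> (nat \<times> nat \<Rightarrow> nat) \<Rightarrow> (nat \<times> nat) list \<Rightarrow> table" where
  "sketch n L \<rho> w xs = fold (\<lambda>e T. sketch_update n L \<rho> T (fst e, snd e, w e)) xs (sketch_init n L)"

definition valid_stream :: "nat \<Rightarrow> nat \<Rightarrow> real \<Rightarrow> (nat \<times> nat \<Rightarrow> nat) \<Rightarrow> (nat \<times> nat) list \<Rightarrow> bool" where
  "valid_stream n L \<rho> w xs \<longleftrightarrow> (\<forall>(u, v)\<in>set xs. u < v \<and> v < n \<and> weight_class \<rho> (w (u, v)) < L)"

definition stored_links :: "nat \<Rightarrow> nat \<Rightarrow> table \<Rightarrow> ((nat \<times> nat) \<times> nat) set" where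
  "stored_links n L T =
     {((i, T (0, i, j) - 1), j) | i j. i < n \<and> j < L \<and> 0 < T (0, i, j)}
   \<union> {((n - T (1, i, j), i), j) | i j. i < n \<and> j < L \<and> 0 < T (1, i, j)}"

lemma sketch_update_apply:
  assumes "(t, i, j) \<in> sketch_cells n L"
  shows "sketch_update n L \<rho> T (u, v, wt) (t, i, j) =
    (if t = 0 \<and> i = u \<and> j = weight_class \<rho> wt then max (T (t, i, j)) (min n (Suc v))
     else if t = 1 \<and> i = v \<and> j = weight_class \<rho> wt then max (T (t, i, j)) (n - u)
     else T (t, i, j))"
  using assms unfolding sketch_update_def by simp

lemma sketch_Nil: "sketch n L \<rho> w [] = sketch_init n L"
  unfolding sketch_def by simp

lemma sketch_snoc: "sketch n L \<rho> w (xs @ [x]) = sketch_update n L \<rho> (sketch n L \<rho> w xs) (fst x, snd x, w x)"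
  unfolding sketch_def by simp

lemma sketch_init_in_space: "sketch_init n L \<in> PiE (sketch_cells n L) (\<lambda>_. {..n})"
  unfolding sketch_init_def by (intro restrict_PiE_iff[THEN iffD2]) simp

lemma sketch_update_in_space:
  assumes "T \<in> PiE (sketch_cells n L) (\<lambda>_. {..n})"
  shows "sketch_update n L \<rho> T x \<in> PiE (sketch_cells n L) (\<lambda>_. {..n})"
proof -
  have "\<forall>p\<in>sketch_cells n L. T p \<le> n"
    using assms by auto
  then show ?thesis
    unfolding sketch_update_def by (auto simp: restrict_PiE_iff split: prod.splits)
qed

lemma card_sketch_space: "card (PiE (sketch_cells n L) (\<lambda>_. {..n})) = (n + 1) ^ (2 * n * L)"
proof -
  have "finite (sketch_cells n L)" "card (sketch_cells n L) = 2 * n * L"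
    unfolding sketch_cells_def by (simp_all add: card_cartesian_product)
  then show ?thesis
    by (simp add: card_PiE)
qed

lemma valid_stream_of_links:
  assumes "\<forall>e\<in>set xs. is_link n e" "\<forall>e\<in>set xs. w e \<le> W" "1 < \<rho>"
  shows "valid_stream n (num_classes \<rho> W) \<rho> w xs"
  using assms weight_class_less_num_classes unfolding valid_stream_def is_link_def by fastforce

lemma stored_links_update:
  assumes "u < v" "v < n"
  shows "stored_links n L (sketch_update n L \<rho> T (u, v, wt))
           \<subseteq> insert ((u, v), weight_class \<rho> wt) (stored_links n L T)"
  using assms unfolding stored_links_def by (auto simp: sketch_update_apply sketch_cells_def max_def)

lemma stored_links_sketch:
  assumes "valid_stream n L \<rho> w xs"
  shows "stored_links n L (sketch n L \<rho> w xs) \<subseteq> (\<lambda>e. (e, weight_class \<rho> (w e))) ` set xs"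
  using assms
proof (induction xs rule: rev_induct)
  case Nil
  then show ?case
    by (simp add: sketch_Nil sketch_init_def stored_links_def sketch_cells_def)
next
  case (snoc x xs)
  obtain u v where x: "x = (u, v)"
    by fastforce
  have "u < v" "v < n" "valid_stream n L \<rho> w xs"
    using snoc.prems unfolding valid_stream_def x by auto
  then show ?case
    using stored_links_update[of u v n L \<rho> _ "w (u, v)"] snoc.IH unfolding x sketch_snoc by force
qed

lemma sketch_records:
  assumes "valid_stream n L \<rho> w xs" "(u, v) \<in> set xs"
  defines "T \<equiv> sketch n L \<rho> w xs" and "c \<equiv> weight_class \<rho> (w (u, v))"
  shows "Suc v \<le> T (0, u, c) \<and> n - u \<le> T (1, v, c)"
  using assms(1,2) unfolding T_def
proof (induction xs rule: rev_induct)
  case (snoc x xs)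
  obtain u' v' where x: "x = (u', v')"
    by fastforce
  have valid: "u < v" "v < n" "c < L" "valid_stream n L \<rho> w xs"
    using snoc.prems unfolding valid_stream_def c_def by auto
  have grows: "sketch n L \<rho> w xs (t, i, j) \<le> sketch n L \<rho> w (xs @ [x]) (t, i, j)"
    if "(t, i, j) \<in> sketch_cells n L" for t i j
    using that unfolding sketch_snoc by (simp add: sketch_update_apply)
  show ?case
  proof (cases "(u, v) \<in> set xs")
    case True
    then show ?thesis
      using snoc.IH valid grows[of 0 u c] grows[of 1 v c] by (force simp: sketch_cells_def)
  next
    case False
    then have "x = (u, v)"
      using snoc.prems by simp
    then show ?thesis
      using valid unfolding sketch_snoc c_def by (simp add: sketch_update_apply sketch_cells_def)
  qed
qed simp

lemma stored_shadows:
  assumes "valid_stream n L \<rho> w xs" "(u, v) \<in> set xs"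
  defines "T \<equiv> sketch n L \<rho> w xs" and "c \<equiv> weight_class \<rho> (w (u, v))"
  shows "((u, T (0, u, c) - 1), c) \<in> stored_links n L T" "v \<le> T (0, u, c) - 1"
    and "((n - T (1, v, c), v), c) \<in> stored_links n L T" "n - T (1, v, c) \<le> u"
proof -
  have "u < v" "v < n" "c < L"
    using assms(1,2) unfolding valid_stream_def c_def by auto
  moreover have "Suc v \<le> T (0, u, c)" "n - u \<le> T (1, v, c)"
    using sketch_records[OF assms(1,2)] unfolding T_def c_def by auto
  ultimately show "((u, T (0, u, c) - 1), c) \<in> stored_links n L T" "v \<le> T (0, u, c) - 1"
    and "((n - T (1, v, c), v), c) \<in> stored_links n L T" "n - T (1, v, c) \<le> u"
    unfolding stored_links_def by auto
qed

section \<open>Output and approximation\<close>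

definition cost :: "real \<Rightarrow> ((nat \<times> nat) \<times> nat) set \<Rightarrow> real" where
  "cost \<rho> P = (\<Sum>p\<in>P. class_bound \<rho> (snd p))"

definition sketch_output :: "nat \<Rightarrow> nat \<Rightarrow> real \<Rightarrow> table \<Rightarrow> (nat \<times> nat) set" where
  "sketch_output n L \<rho> T =
     fst ` arg_min_on (cost \<rho>) {P. P \<subseteq> stored_links n L T \<and> three_edge_connected n (fst ` P)}"

lemma finite_stored_links: "finite (stored_links n L T)"
proof -
  have "stored_links n L T \<subseteq> (\<lambda>(i, j). ((i, T (0, i, j) - 1), j)) ` ({..<n} \<times> {..<L})
                            \<union> (\<lambda>(i, j). ((n - T (1, i, j), i), j)) ` ({..<n} \<times> {..<L})"
    unfolding stored_links_def by auto
  then show ?thesis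
    by (rule finite_subset) auto
qed

lemma sketch_output_cheapest:
  assumes "P \<subseteq> stored_links n L T" "three_edge_connected n (fst ` P)"
  obtains P0 where "P0 \<subseteq> stored_links n L T" "three_edge_connected n (fst ` P0)"
    "sketch_output n L \<rho> T = fst ` P0" "cost \<rho> P0 \<le> cost \<rho> P"
proof -
  define F where "F = {P. P \<subseteq> stored_links n L T \<and> three_edge_connected n (fst ` P)}"
  have "finite F"
    unfolding F_def by (rule finite_subset[of _ "Pow (stored_links n L T)"]) (auto simp: finite_stored_links)
  moreover have "P \<in> F"
    using assms unfolding F_def by simp
  ultimately have "arg_min_on (cost \<rho>) F \<in> F" "cost \<rho> (arg_min_on (cost \<rho>) F) \<le> cost \<rho> P"
    using arg_min_if_finite[of F "cost \<rho>"] by (auto simp: not_less)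
  then show ?thesis
    using that unfolding sketch_output_def F_def by blast
qed

lemma weight_le_cost:
  assumes "1 < \<rho>" "finite P" "\<forall>p\<in>P. snd p = weight_class \<rho> (w (fst p))"
  shows "real (weight w (fst ` P)) \<le> cost \<rho> P"
proof -
  have "real (weight w (fst ` P)) \<le> (\<Sum>p\<in>P. real (w (fst p)))"
    unfolding weight_def using sum_image_le[OF assms(2), of "\<lambda>e. real (w e)" fst] by (simp add: comp_def)
  also have "\<dots> \<le> cost \<rho> P"
    unfolding cost_def using assms(3) weight_class_bounds(1)[OF assms(1)] by (intro sum_mono) simp
  finally show ?thesis .
qed

lemma cost_image_le:
  assumes "1 < \<rho>" "finite S" "\<forall>e\<in>S. snd (f e) = weight_class \<rho> (w e)"
  shows "cost \<rho> (f ` S) \<le> \<rho> * real (weight w S)"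
proof -
  have "cost \<rho> (f ` S) \<le> (\<Sum>e\<in>S. class_bound \<rho> (snd (f e)))"
    unfolding cost_def using sum_image_le[OF assms(2), of "\<lambda>p. class_bound \<rho> (snd p)" f]
      class_bound_nonneg[OF assms(1)] by (simp add: comp_def)
  also have "\<dots> \<le> (\<Sum>e\<in>S. \<rho> * real (w e))"
    using assms(3) weight_class_bounds(2)[OF assms(1)] by (intro sum_mono) simp
  also have "\<dots> = \<rho> * real (weight w S)"
    by (simp add: weight_def sum_distrib_left)
  finally show ?thesis .
qed

lemma cost_Un_le:
  assumes "1 < \<rho>" "finite A" "finite B"
  shows "cost \<rho> (A \<union> B) \<le> cost \<rho> A + cost \<rho> B"
  unfolding cost_def using assms by (simp add: sum_Un sum_nonneg class_bound_nonneg)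

lemma cheap_stored_solution:
  assumes valid: "valid_stream n L \<rho> w xs" and "1 < \<rho>" and S: "feasible_aug n (set xs) S"
  defines "T \<equiv> sketch n L \<rho> w xs"
  obtains P where "P \<subseteq> stored_links n L T" "three_edge_connected n (fst ` P)"
    "cost \<rho> P \<le> 2 * \<rho> * real (weight w S)"
proof -
  define c where "c = (\<lambda>e. weight_class \<rho> (w e))"
  define right left where
    "right = (\<lambda>(u, v). ((u, T (0, u, c (u, v)) - 1), c (u, v)))" and
    "left = (\<lambda>(u, v). ((n - T (1, v, c (u, v)), v), c (u, v)))"
  define P where "P = right ` S \<union> left ` S"
  have "S \<subseteq> set xs" "three_edge_connected n S"
    using S unfolding feasible_aug_def by auto
  then have "finite S"
    using finite_subset by blast
  have "P \<subseteq> stored_links n L T"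
    using stored_shadows(1,3)[OF valid] \<open>S \<subseteq> set xs\<close>
    unfolding P_def right_def left_def T_def c_def by auto
  have "shadows (fst ` P) S"
    unfolding shadows_def
  proof
    fix e assume "e \<in> S"
    then show "(\<exists>v. (fst e, v) \<in> fst ` P \<and> snd e \<le> v) \<and> (\<exists>u. (u, snd e) \<in> fst ` P \<and> u \<le> fst e)"
      using stored_shadows(2,4)[OF valid] \<open>S \<subseteq> set xs\<close>
      unfolding P_def right_def left_def T_def c_def by (cases e) force
  qed
  have P: "three_edge_connected n (fst ` P)"
  proof (rule three_edge_connected_shadows[OF \<open>three_edge_connected n S\<close>])
    show "\<forall>e\<in>S. fst e < snd e" "\<forall>e\<in>fst ` P. fst e < n \<and> snd e < n"
      using valid \<open>S \<subseteq> set xs\<close> \<open>P \<subseteq> stored_links n L T\<close> stored_links_sketch[OF valid]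
      unfolding valid_stream_def T_def by fastforce+
  qed (use \<open>finite S\<close> \<open>shadows (fst ` P) S\<close> P_def in auto)
  have "cost \<rho> P \<le> cost \<rho> (right ` S) + cost \<rho> (left ` S)"
    using cost_Un_le[OF \<open>1 < \<rho>\<close>] \<open>finite S\<close> unfolding P_def by blast
  also have "\<dots> \<le> \<rho> * real (weight w S) + \<rho> * real (weight w S)"
    using \<open>finite S\<close> \<open>1 < \<rho>\<close>
    by (intro add_mono cost_image_le) (auto simp: right_def left_def c_def)
  finally show ?thesis
    using that \<open>P \<subseteq> stored_links n L T\<close> P by simp
qed

lemma sketch_output_approximation:
  assumes valid: "valid_stream n L \<rho> w xs" and "1 < \<rho>" and S: "feasible_aug n (set xs) S"
  defines "out \<equiv> sketch_output n L \<rho> (sketch n L \<rho> w xs)"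
  shows "feasible_aug n (set xs) out" and "real (weight w out) \<le> 2 * \<rho> * real (weight w S)"
proof -
  define T where "T = sketch n L \<rho> w xs"
  have stored: "fst p \<in> set xs \<and> snd p = weight_class \<rho> (w (fst p))" if "p \<in> stored_links n L T" for p
    using stored_links_sketch[OF valid] that unfolding T_def by auto
  obtain P where "P \<subseteq> stored_links n L T" "three_edge_connected n (fst ` P)"
      "cost \<rho> P \<le> 2 * \<rho> * real (weight w S)"
    using cheap_stored_solution[OF assms(1-3)] unfolding T_def by blast
  then obtain P0 where P0: "P0 \<subseteq> stored_links n L T" "three_edge_connected n (fst ` P0)"
      "out = fst ` P0" "cost \<rho> P0 \<le> 2 * \<rho> * real (weight w S)"
    using sketch_output_cheapest[of P n L T \<rho>] unfolding out_def T_def by (metis order_trans)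
  show "feasible_aug n (set xs) out"
    using P0(1-3) stored unfolding feasible_aug_def by auto
  have "real (weight w out) \<le> cost \<rho> P0"
    unfolding P0(3) using stored P0(1) finite_subset[OF P0(1) finite_stored_links]
    by (intro weight_le_cost \<open>1 < \<rho>\<close>) auto
  with P0(4) show "real (weight w out) \<le> 2 * \<rho> * real (weight w S)"
    by linarith
qed

section \<open>Memory\<close>

definition num_words :: "nat \<Rightarrow> nat \<Rightarrow> nat \<Rightarrow> nat" where
  "num_words n W L = nat \<lceil>2 * real n * real L * ln (real n + 1) / ln (real n + real W + 2)\<rceil>"

lemma power_le_power_num_words: "(n + 1) ^ (2 * n * L) \<le> (n + W + 2) ^ num_words n W L"
proof -
  have pos: "0 < ln (real n + real W + 2)"
    by simp
  have "2 * real n * real L * ln (real n + 1) / ln (real n + real W + 2) \<le> real (num_words n W L)"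
    unfolding num_words_def by linarith
  then have "real (2 * n * L) * ln (real n + 1) \<le> real (num_words n W L) * ln (real n + real W + 2)"
    using pos by (simp add: divide_le_eq)
  then have "ln (real ((n + 1) ^ (2 * n * L))) \<le> ln (real ((n + W + 2) ^ num_words n W L))"
    by (simp add: ln_realpow add_ac)
  then show ?thesis
    by (simp del: of_nat_power add: ln_le_cancel_iff)
qed

lemma ln_one_plus_half_ge:
  fixes \<epsilon> :: real
  assumes "0 < \<epsilon>" "\<epsilon> \<le> 1"
  shows "\<epsilon> / 4 \<le> ln (1 + \<epsilon> / 2)"
proof -
  have "\<epsilon> / 4 \<le> \<epsilon> / 2 - (\<epsilon> / 2)\<^sup>2"
    using assms mult_left_mono[of \<epsilon> 1 \<epsilon>] by (simp add: power2_eq_square)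
  also have "\<dots> \<le> ln (1 + \<epsilon> / 2)"
    using assms by (intro ln_one_plus_pos_lower_bound) auto
  finally show ?thesis .
qed

lemma num_classes_le:
  assumes "0 < \<epsilon>" "\<epsilon> \<le> 1"
  shows "real (num_classes (1 + \<epsilon> / 2) W) \<le> 4 * ln (real W) / \<epsilon> + 3"
proof -
  have lnW: "0 \<le> ln (real W)"
    by (cases "W = 0") auto
  have "0 < ln (1 + \<epsilon> / 2)"
    using assms by simp
  then have "real (num_classes (1 + \<epsilon> / 2) W) \<le> ln (real W) / ln (1 + \<epsilon> / 2) + 3"
    unfolding num_classes_def using lnW by (simp add: of_nat_nat) linarith
  also have "ln (real W) / ln (1 + \<epsilon> / 2) \<le> ln (real W) / (\<epsilon> / 4)"
    using lnW ln_one_plus_half_ge[OF assms] assms by (intro divide_left_mono) auto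
  finally show ?thesis
    by (simp add: mult.commute)
qed

lemma ln_mult_ln_div_le_log:
  "ln (real W) * ln (real n + 1) / ln (real n + real W + 2) \<le> log 2 (real (min W n) + 2)"
proof -
  have "ln (real W) * ln (real n + 1) \<le> ln (real (min W n) + 2) * ln (real n + real W + 2)"
  proof (cases "W \<le> n")
    case True
    then show ?thesis
      by (cases "W = 0") (auto intro: mult_mono)
  next
    case False
    then show ?thesis
      by (subst mult.commute) (auto intro: mult_mono)
  qed
  then have "ln (real W) * ln (real n + 1) / ln (real n + real W + 2) \<le> ln (real (min W n) + 2)"
    by (simp add: pos_divide_le_eq)
  also have "\<dots> \<le> log 2 (real (min W n) + 2)"
    unfolding log_def using ln_2_less_1 by (simp add: le_divide_eq mult_left_le)
  finally show ?thesis .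
qed

lemma num_words_le:
  assumes "0 < \<epsilon>" "\<epsilon> \<le> 1" "1 \<le> n"
  shows "real (num_words n W (num_classes (1 + \<epsilon> / 2) W))
           \<le> 15 * real n / \<epsilon> * log 2 (real (min W n) + 2)"
proof -
  define L where "L = num_classes (1 + \<epsilon> / 2) W"
  define q where "q = ln (real n + 1) / ln (real n + real W + 2)"
  define m where "m = real (min W n) + 2"
  have q: "0 \<le> q" "q \<le> 1"
    unfolding q_def by auto
  have "ln (real W) * q \<le> log 2 m"
    using ln_mult_ln_div_le_log[of W n] unfolding q_def m_def by simp
  have "1 \<le> log 2 m"
    unfolding m_def by simp
  then have "1 \<le> log 2 m / \<epsilon>"
    using assms by (simp add: le_divide_eq)
  have "real (num_words n W L) \<le> 2 * real n * real L * q + 1"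
    unfolding num_words_def q_def by (simp add: of_nat_nat)
  also have "\<dots> \<le> 2 * real n * (4 * ln (real W) / \<epsilon> + 3) * q + 1"
    using num_classes_le[OF assms(1,2)] q unfolding L_def by (intro add_mono mult_right_mono mult_left_mono) auto
  also have "\<dots> = 8 * real n * (ln (real W) * q) / \<epsilon> + (6 * real n * q + 1)"
    using assms by (simp add: field_simps)
  also have "\<dots> \<le> 8 * real n * log 2 m / \<epsilon> + 7 * real n * log 2 m / \<epsilon>"
  proof (rule add_mono)
    show "8 * real n * (ln (real W) * q) / \<epsilon> \<le> 8 * real n * log 2 m / \<epsilon>"
      using \<open>ln (real W) * q \<le> log 2 m\<close> assms by (intro divide_right_mono mult_left_mono) auto
    have "6 * real n * q \<le> 6 * real n"
      using q by (simp add: mult_left_le)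
    moreover have "1 \<le> real n"
      using assms(3) by simp
    ultimately have "6 * real n * q + 1 \<le> 7 * real n"
      by linarith
    also have "\<dots> \<le> 7 * real n * (log 2 m / \<epsilon>)"
      using mult_left_mono[OF \<open>1 \<le> log 2 m / \<epsilon>\<close>, of "7 * real n"] by simp
    finally show "6 * real n * q + 1 \<le> 7 * real n * log 2 m / \<epsilon>"
      by simp
  qed
  also have "\<dots> = 15 * real n / \<epsilon> * log 2 m"
    by (simp add: field_simps)
  finally show ?thesis
    unfolding L_def m_def .
qed

lemma opt_aug_attained:
  assumes "finite L" "feasible_aug n L S"
  obtains S' where "feasible_aug n L S'" "weight w S' = opt_aug n L w"
proof -
  have "finite {S. feasible_aug n L S}"
    unfolding feasible_aug_def by (rule finite_subset[of _ "Pow L"]) (auto simp: assms(1))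
  then have "opt_aug n L w \<in> weight w ` {S. feasible_aug n L S}"
    unfolding opt_aug_def using assms(2) by (intro Min_in) auto
  then show ?thesis
    using that by (auto simp: image_iff)
qed

lemma run_stream_simulation:
  fixes f :: "'s \<Rightarrow> nat \<times> nat \<times> nat \<Rightarrow> 's" and B :: "nat list set"
  assumes "finite A" "finite B" "card A \<le> card B" "s0 \<in> A" "\<And>s x. s \<in> A \<Longrightarrow> f s x \<in> A"
  shows "\<exists>init step dec. \<forall>w xs. run_stream step init w xs \<in> B
           \<and> dec (run_stream step init w xs) = fold (\<lambda>e s. f s (fst e, snd e, w e)) xs s0"
proof -
  obtain enc where enc: "inj_on enc A" "enc ` A \<subseteq> B"
    using card_le_inj[OF assms(1-3)] by blast
  define dec where "dec = inv_into A enc"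
  define step where "step = (\<lambda>s x. enc (f (dec s) x))"
  have run: "run_stream step (enc s0) w xs = enc (fold (\<lambda>e s. f s (fst e, snd e, w e)) xs s0)
      \<and> fold (\<lambda>e s. f s (fst e, snd e, w e)) xs s0 \<in> A" for w xs
  proof (induction xs rule: rev_induct)
    case (snoc x xs)
    then show ?case
      using assms(5) enc(1) unfolding run_stream_def step_def dec_def by simp
  qed (simp add: run_stream_def assms(4))
  then have "run_stream step (enc s0) w xs \<in> B"
    and "dec (run_stream step (enc s0) w xs) = fold (\<lambda>e s. f s (fst e, snd e, w e)) xs s0" for w xs
    using enc unfolding dec_def by auto
  then show ?thesis
    by blast
qed

definition memory_within :: "nat list \<Rightarrow> (nat list \<Rightarrow> nat \<times> nat \<times> nat \<Rightarrow> nat list) \<Rightarrow> real \<Rightarrow> nat \<Rightarrow> bool" where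
  "memory_within init step M base \<longleftrightarrow>
     (\<forall>w xs. real (length (run_stream step init w xs)) \<le> M \<and> (\<forall>a\<in>set (run_stream step init w xs). a < base))"

definition approximation_algorithm ::
  "nat \<Rightarrow> nat \<Rightarrow> real \<Rightarrow> nat list \<Rightarrow> (nat list \<Rightarrow> nat \<times> nat \<times> nat \<Rightarrow> nat list) \<Rightarrow> (nat list \<Rightarrow> (nat \<times> nat) set) \<Rightarrow> bool"
where
  "approximation_algorithm n W \<alpha> init step out \<longleftrightarrow>
     (\<forall>xs w S. (\<forall>e\<in>set xs. is_link n e) \<longrightarrow> (\<forall>e\<in>set xs. w e \<le> W) \<longrightarrow> feasible_aug n (set xs) S \<longrightarrow>
        feasible_aug n (set xs) (out (run_stream step init w xs))
        \<and> real (weight w (out (run_stream step init w xs))) \<le> \<alpha> * real (opt_aug n (set xs) w))"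

lemma shadow_sketch_algorithm:
  fixes \<epsilon> :: real and n W :: nat
  assumes "0 < \<epsilon>" "\<epsilon> \<le> 1" "1 \<le> n"
  shows "\<exists>init step out. memory_within init step (15 * real n / \<epsilon> * log 2 (real (min W n) + 2)) (n + W + 2)
           \<and> approximation_algorithm n W (2 + \<epsilon>) init step out"
proof -
  define \<rho> L where "\<rho> = 1 + \<epsilon> / 2" and "L = num_classes \<rho> W"
  define words where "words = {ys. set ys \<subseteq> {..<n + W + 2} \<and> length ys = num_words n W L}"
  have "1 < \<rho>" "2 * \<rho> = 2 + \<epsilon>"
    using assms unfolding \<rho>_def by auto
  have "finite (PiE (sketch_cells n L) (\<lambda>_. {..n}))" "finite words"
    unfolding sketch_cells_def words_def by (simp_all add: finite_PiE finite_lists_length_eq)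
  moreover have "card (PiE (sketch_cells n L) (\<lambda>_. {..n})) \<le> card words"
    unfolding card_sketch_space words_def card_lists_length_eq[OF finite_lessThan]
    using power_le_power_num_words by simp
  ultimately obtain init step dec where
    run: "\<forall>w xs. run_stream step init w xs \<in> words \<and> dec (run_stream step init w xs) = sketch n L \<rho> w xs"
    using run_stream_simulation[where f = "sketch_update n L \<rho>",
        OF _ _ _ sketch_init_in_space sketch_update_in_space]
    unfolding sketch_def by blast
  then have "memory_within init step (15 * real n / \<epsilon> * log 2 (real (min W n) + 2)) (n + W + 2)"
    using num_words_le[OF assms] unfolding memory_within_def words_def L_def \<rho>_def by auto
  moreover have "approximation_algorithm n W (2 + \<epsilon>) init step (sketch_output n L \<rho> \<circ> dec)"
    unfolding approximation_algorithm_def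
  proof (intro allI impI)
    fix xs w S
    assume links: "\<forall>e\<in>set xs. is_link n e" "\<forall>e\<in>set xs. w e \<le> W"
      and "feasible_aug n (set xs) S"
    then obtain S' where S': "feasible_aug n (set xs) S'" "weight w S' = opt_aug n (set xs) w"
      using opt_aug_attained[OF finite_set] by blast
    have "valid_stream n L \<rho> w xs"
      unfolding L_def by (rule valid_stream_of_links[OF links \<open>1 < \<rho>\<close>])
    then have "feasible_aug n (set xs) (sketch_output n L \<rho> (sketch n L \<rho> w xs))"
      and "real (weight w (sketch_output n L \<rho> (sketch n L \<rho> w xs))) \<le> 2 * \<rho> * real (weight w S')"
      by (rule sketch_output_approximation[OF _ \<open>1 < \<rho>\<close> S'(1)])+
    then show "feasible_aug n (set xs) ((sketch_output n L \<rho> \<circ> dec) (run_stream step init w xs))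
      \<and> real (weight w ((sketch_output n L \<rho> \<circ> dec) (run_stream step init w xs)))
          \<le> (2 + \<epsilon>) * real (opt_aug n (set xs) w)"
      using run S'(2) \<open>2 * \<rho> = 2 + \<epsilon>\<close> by simp
  qed
  ultimately show ?thesis
    by blast
qed

theorem mainTheorem3:
  shows "\<exists>(C::real) (k::nat). C > 0 \<and>
    (\<forall>(\<epsilon>::real) (n::nat) (W::nat). 0 < \<epsilon> \<and> \<epsilon> \<le> 1 \<and> n \<ge> 3 \<longrightarrow>
      (\<exists>(init::nat list) (step::nat list \<Rightarrow> nat \<times> nat \<times> nat \<Rightarrow> nat list)
          (out::nat list \<Rightarrow> (nat \<times> nat) set).
        \<forall>(xs::(nat \<times> nat) list) (w::nat \<times> nat \<Rightarrow> nat).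
          distinct xs \<and> (\<forall>e\<in>set xs. is_link n e) \<and> (\<forall>e\<in>set xs. w e \<le> W) \<longrightarrow>
            (\<forall>m\<le>length xs.
               real (length (run_stream step init w (take m xs)))
                 \<le> C * real n / \<epsilon> * log 2 (real (min W n) + 2)
               \<and> (\<forall>a\<in>set (run_stream step init w (take m xs)). a < (n + W + 2) ^ k))
            \<and> ((\<exists>S. feasible_aug n (set xs) S) \<longrightarrow>
                 feasible_aug n (set xs) (out (run_stream step init w xs))
                 \<and> real (weight w (out (run_stream step init w xs)))
                     \<le> (2 + \<epsilon>) * real (opt_aug n (set xs) w))))"
  apply (intro exI[of _ "15::real"] exI[of _ "1::nat"] conjI allI impI)
   apply simp
  subgoal premises hyps for \<epsilon> n W
  proof -
    obtain init step out where
      "memory_within init step (15 * real n / \<epsilon> * log 2 (real (min W n) + 2)) (n + W + 2)"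
      "approximation_algorithm n W (2 + \<epsilon>) init step out"
      using shadow_sketch_algorithm[of \<epsilon> n W] hyps by auto
    then show ?thesis
      unfolding memory_within_def approximation_algorithm_def
      by (intro exI[of _ init] exI[of _ step] exI[of _ out]) auto
  qed
  done

end
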